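(* Let $\mathcal{B}\subseteq\mathcal{C}$ be $*$-invariant subspaces of $\mathcal{A}$ with $1\in\mathcal{B}$, let $m\ge1$ with $\mathcal{B}^{[m]}\subseteq\mathcal{C}$, and let $L$ be a hermitian linear functional on $\mathcal{C}^2$ with $\mathcal{C}=\mathcal{B}+K_L(\mathcal{C})$. Put $\mathcal{K}:=K_L(\mathcal{C})\cap\mathcal{B}^{[1]}$. Then $\mathcal{K}^{[2m-1]}\cap\mathcal{C}\subseteq K_L(\mathcal{C})$.
   Context: $\mathcal{A}$ is a complex unital $*$-algebra with fixed generators $\{a_i:i\in I\}$, the set being closed under $*$. For a subspace $V$, $V^+:=V+\mathrm{Lin}\{a_iv:i\in I,v\in V\}$, $V^{[0]}=V$, $V^{[l+1]}=(V^{[l]})^+$. $\mathcal{C}^2:=\mathrm{Lin}\{ab:a,b\in\mathcal{C}\}$; $L$ hermitian means $L(b^* )=\overline{L(b)}$; $K_L(\mathcal{C}):=\{a\in\mathcal{C}: L(b^*a)=0\ \forall b\in\mathcal{C}\}$. *)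

theory Defs
  imports Complex_Main
begin

definition star_algebra :: "(complex \<Rightarrow> 'a::ring_1 \<Rightarrow> 'a) \<Rightarrow> ('a \<Rightarrow> 'a) \<Rightarrow> bool" where
  "star_algebra smul invol \<longleftrightarrow>
     vector_space smul
   \<and> (\<forall>c x y. smul c (x * y) = smul c x * y \<and> smul c (x * y) = x * smul c y)
   \<and> (\<forall>x. invol (invol x) = x)
   \<and> (\<forall>x y. invol (x + y) = invol x + invol y)
   \<and> (\<forall>c x. invol (smul c x) = smul (cnj c) (invol x))
   \<and> (\<forall>x y. invol (x * y) = invol y * invol x)"

definition generators :: "(complex \<Rightarrow> 'a::ring_1 \<Rightarrow> 'a) \<Rightarrow> ('a \<Rightarrow> 'a) \<Rightarrow> 'a set \<Rightarrow> bool" where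
  "generators smul invol G \<longleftrightarrow>
     invol ` G \<subseteq> G
   \<and> module.span smul {prod_list xs | xs. set xs \<subseteq> G} = UNIV"

definition set_plus :: "'a::plus set \<Rightarrow> 'a set \<Rightarrow> 'a set" where
  "set_plus V W = {v + w | v w. v \<in> V \<and> w \<in> W}"

definition step_space :: "(complex \<Rightarrow> 'a::ring_1 \<Rightarrow> 'a) \<Rightarrow> 'a set \<Rightarrow> 'a set \<Rightarrow> 'a set" where
  "step_space smul G V = set_plus V (module.span smul {a * v | a v. a \<in> G \<and> v \<in> V})"

definition iter_space :: "(complex \<Rightarrow> 'a::ring_1 \<Rightarrow> 'a) \<Rightarrow> 'a set \<Rightarrow> nat \<Rightarrow> 'a set \<Rightarrow> 'a set" where
  "iter_space smul G l V = (step_space smul G ^^ l) V"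

definition sq_space :: "(complex \<Rightarrow> 'a::ring_1 \<Rightarrow> 'a) \<Rightarrow> 'a set \<Rightarrow> 'a set" where
  "sq_space smul C = module.span smul {a * b | a b. a \<in> C \<and> b \<in> C}"

definition star_invariant :: "('a \<Rightarrow> 'a) \<Rightarrow> 'a set \<Rightarrow> bool" where
  "star_invariant invol V \<longleftrightarrow> invol ` V \<subseteq> V"

definition linear_on :: "(complex \<Rightarrow> 'a::ring_1 \<Rightarrow> 'a) \<Rightarrow> 'a set \<Rightarrow> ('a \<Rightarrow> complex) \<Rightarrow> bool" where
  "linear_on smul W L \<longleftrightarrow>
     (\<forall>x\<in>W. \<forall>y\<in>W. L (x + y) = L x + L y) \<and> (\<forall>c. \<forall>x\<in>W. L (smul c x) = c * L x)"

definition hermitian_on :: "('a \<Rightarrow> 'a) \<Rightarrow> 'a set \<Rightarrow> ('a \<Rightarrow> complex) \<Rightarrow> bool" where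
  "hermitian_on invol W L \<longleftrightarrow> (\<forall>b\<in>W. L (invol b) = cnj (L b))"

definition kernel_L :: "('a::ring_1 \<Rightarrow> 'a) \<Rightarrow> ('a \<Rightarrow> complex) \<Rightarrow> 'a set \<Rightarrow> 'a set" where
  "kernel_L invol L C = {a \<in> C. \<forall>b\<in>C. L (invol b * a) = 0}"

end

theory Submission
  imports Defs
begin

(* Call c orthogonal to y (w.r.t. L) when c^* y lies in C^2 and L(c^* y) = 0.
   For fixed c this is a linear condition on y, so it passes from V to V^+ as soon as both
   c and all a^* c (a a generator) are orthogonal to V.  Since a^* c lies one level higher
   in the filtration B, B^[1], B^[2], ..., an induction on n shows that every c in B^[p]
   is orthogonal to every y in K^[n] whenever p <= m and p + n <= 2m - 1.  The induction
   stays inside B^[m] <= C; when p reaches m, one uses instead that y lies in C and is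
   orthogonal to B, and the decomposition C = B + K_L(C) together with hermiticity of L
   makes y orthogonal to all of C (the kernel criterion below).  Taking p = 0 and
   n = 2m - 1 and applying the kernel criterion once more gives the theorem. *)

locale algebra_module = module smul for smul :: "complex \<Rightarrow> 'a::ring_1 \<Rightarrow> 'a"
begin

lemma iter_space_0 [simp]: "iter_space smul G 0 V = V"
  by (simp add: iter_space_def)

lemma iter_space_Suc: "iter_space smul G (Suc n) V = step_space smul G (iter_space smul G n V)"
  by (simp add: iter_space_def)

lemma iter_space_add: "iter_space smul G p (iter_space smul G q V) = iter_space smul G (p + q) V"
  by (simp add: iter_space_def funpow_add)

lemma step_spaceE:
  assumes "y \<in> step_space smul G V"
  obtains z s where "z \<in> V" "s \<in> span {a * v | a v. a \<in> G \<and> v \<in> V}" "y = z + s"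
  using assms by (auto simp: step_space_def set_plus_def)

lemma subset_step_space: "V \<subseteq> step_space smul G V"
  unfolding step_space_def set_plus_def by (force intro: span_zero)

lemma step_space_mono:
  assumes "V \<subseteq> W"
  shows "step_space smul G V \<subseteq> step_space smul G W"
proof -
  have "span {a * v | a v. a \<in> G \<and> v \<in> V} \<subseteq> span {a * v | a v. a \<in> G \<and> v \<in> W}"
    using assms by (intro span_mono) blast
  with assms show ?thesis unfolding step_space_def set_plus_def by blast
qed

lemma iter_space_mono: "V \<subseteq> W \<Longrightarrow> iter_space smul G n V \<subseteq> iter_space smul G n W"
  by (induction n) (auto simp: iter_space_Suc dest: step_space_mono)

lemma iter_space_le: "p \<le> q \<Longrightarrow> iter_space smul G p V \<subseteq> iter_space smul G q V"
proof (induction q)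
  case (Suc q)
  then show ?case
    using subset_step_space[of "iter_space smul G q V"]
    by (cases "p = Suc q") (auto simp: iter_space_Suc)
qed simp

lemma generator_mult_iter_space:
  assumes "0 \<in> V" and a: "a \<in> G" and c: "c \<in> iter_space smul G p V"
  shows "a * c \<in> iter_space smul G (Suc p) V"
proof -
  have zero: "0 \<in> iter_space smul G p V"
    using assms(1) iter_space_le[of 0 p G V] by auto
  have "a * c \<in> span {a * v | a v. a \<in> G \<and> v \<in> iter_space smul G p V}"
    by (rule span_base) (use a c in blast)
  then have "0 + a * c \<in> step_space smul G (iter_space smul G p V)"
    using zero unfolding step_space_def set_plus_def by blast
  then show ?thesis by (simp add: iter_space_Suc)
qed

end

lemma star_algebra_module: "star_algebra smul invol \<Longrightarrow> module smul"
  by (simp add: star_algebra_def module_iff_vector_space)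

lemma star_algebra_invol_invol: "star_algebra smul invol \<Longrightarrow> invol (invol x) = x"
  by (simp add: star_algebra_def)

lemma star_algebra_invol_add: "star_algebra smul invol \<Longrightarrow> invol (x + y) = invol x + invol y"
  by (simp add: star_algebra_def)

lemma star_algebra_invol_mult: "star_algebra smul invol \<Longrightarrow> invol (x * y) = invol y * invol x"
  by (simp add: star_algebra_def)

lemma star_algebra_smul_right: "star_algebra smul invol \<Longrightarrow> smul c (x * y) = x * smul c y"
  unfolding star_algebra_def by metis

text \<open>Only the hypotheses that the argument actually uses are assumed here.\<close>
locale kernel_setting =
  fixes smul :: "complex \<Rightarrow> 'a::ring_1 \<Rightarrow> 'a" and invol :: "'a \<Rightarrow> 'a"
    and G B C :: "'a set" and L :: "'a \<Rightarrow> complex" and m :: nat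
  assumes alg: "star_algebra smul invol"
    and gen: "generators smul invol G"
    and subB: "module.subspace smul B"
    and invC: "star_invariant invol C"
    and Bm: "iter_space smul G m B \<subseteq> C"
    and lin: "linear_on smul (sq_space smul C) L"
    and herm: "hermitian_on invol (sq_space smul C) L"
    and decomp: "C = set_plus B (kernel_L invol L C)"
begin

sublocale algebra_module smul
  by unfold_locales (use star_algebra_module[OF alg] in \<open>simp_all add: module_def\<close>)

abbreviation S :: "'a set" where "S \<equiv> sq_space smul C"

definition orth :: "'a \<Rightarrow> 'a \<Rightarrow> bool" where
  "orth c y \<longleftrightarrow> invol c * y \<in> S \<and> L (invol c * y) = 0"

lemma S_subspace: "subspace S"
  unfolding sq_space_def by simp

lemma mult_mem_S: "x \<in> C \<Longrightarrow> y \<in> C \<Longrightarrow> x * y \<in> S"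
  unfolding sq_space_def by (rule span_base) blast

lemma invol_mem_C: "x \<in> C \<Longrightarrow> invol x \<in> C"
  using invC by (auto simp: star_invariant_def)

lemma L_add: "x \<in> S \<Longrightarrow> y \<in> S \<Longrightarrow> L (x + y) = L x + L y"
  using lin by (simp add: linear_on_def)

lemma L_smul: "x \<in> S \<Longrightarrow> L (smul r x) = r * L x"
  using lin by (simp add: linear_on_def)

lemma L_zero: "L 0 = 0"
  using L_add[of 0 0] subspace_0[OF S_subspace] by simp

lemma orth_kernel: "c \<in> C \<Longrightarrow> y \<in> kernel_L invol L C \<Longrightarrow> orth c y"
  using mult_mem_S invol_mem_C unfolding kernel_L_def orth_def by blast

lemma orth_subspace: "subspace {y. orth c y}"
proof (rule subspaceI)
  show "0 \<in> {y. orth c y}"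
    using subspace_0[OF S_subspace] L_zero by (simp add: orth_def)
next
  fix x y assume "x \<in> {y. orth c y}" "y \<in> {y. orth c y}"
  then show "x + y \<in> {y. orth c y}"
    using subspace_add[OF S_subspace] L_add by (auto simp: orth_def distrib_left)
next
  fix r x assume "x \<in> {y. orth c y}"
  then show "smul r x \<in> {y. orth c y}"
    using subspace_scale[OF S_subspace] L_smul
    by (auto simp: orth_def star_algebra_smul_right[OF alg, symmetric])
qed

lemma orth_step_space:
  assumes V: "\<forall>v\<in>V. orth c v" and GV: "\<forall>a\<in>G. \<forall>v\<in>V. orth (invol a * c) v"
    and y: "y \<in> step_space smul G V"
  shows "orth c y"
proof -
  obtain z s where z: "z \<in> V" and s: "s \<in> span {a * v | a v. a \<in> G \<and> v \<in> V}"
    and yzs: "y = z + s"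
    using y by (rule step_spaceE)
  have "{a * v | a v. a \<in> G \<and> v \<in> V} \<subseteq> {y. orth c y}"
  proof clarify
    fix a v assume "a \<in> G" "v \<in> V"
    moreover have "invol (invol a * c) * v = invol c * (a * v)"
      by (simp add: star_algebra_invol_mult[OF alg] star_algebra_invol_invol[OF alg] mult.assoc)
    ultimately show "orth c (a * v)"
      using GV by (metis orth_def)
  qed
  then have "orth c s"
    using span_minimal[OF _ orth_subspace] s by blast
  then show ?thesis
    using V z yzs subspace_add[OF orth_subspace] by auto
qed

text \<open>Kernel criterion: an element of C orthogonal to B is orthogonal to all of C, i.e. it
  lies in K_L(C).  This uses C = B + K_L(C) and the hermiticity of L.\<close>
lemma kernel_criterion:
  assumes y: "y \<in> C" and yB: "\<forall>b\<in>B. orth b y"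
  shows "y \<in> kernel_L invol L C"
proof -
  have "orth c y" if c: "c \<in> C" for c
  proof -
    obtain b k where b: "b \<in> B" and k: "k \<in> kernel_L invol L C" and cbk: "c = b + k"
      using c decomp unfolding set_plus_def by blast
    have kC: "k \<in> C" using k by (simp add: kernel_L_def)
    have ky: "invol k * y \<in> S" using mult_mem_S invol_mem_C kC y by blast
    have "L (invol (invol k * y)) = 0"
      using k y by (simp add: kernel_L_def star_algebra_invol_mult[OF alg] star_algebra_invol_invol[OF alg])
    then have "orth k y"
      using herm ky by (simp add: hermitian_on_def orth_def)
    moreover have "invol c * y = invol b * y + invol k * y"
      by (simp add: cbk star_algebra_invol_add[OF alg] distrib_right)
    ultimately show "orth c y"
      using yB b subspace_add[OF S_subspace] L_add by (auto simp: orth_def)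
  qed
  then show ?thesis
    using y by (simp add: kernel_L_def orth_def)
qed

lemma orth_level_step:
  assumes next_level: "\<forall>c'\<in>iter_space smul G (Suc p) B. \<forall>v\<in>V. orth c' v"
    and c: "c \<in> iter_space smul G p B" and y: "y \<in> step_space smul G V"
  shows "orth c y"
proof (rule orth_step_space[OF _ _ y])
  have "c \<in> iter_space smul G (Suc p) B"
    using c iter_space_le[of p "Suc p" G B] by auto
  then show "\<forall>v\<in>V. orth c v" using next_level by blast
  have "invol a \<in> G" if "a \<in> G" for a
    using gen that by (auto simp: generators_def)
  then have "\<forall>a\<in>G. invol a * c \<in> iter_space smul G (Suc p) B"
    using generator_mult_iter_space subspace_0[OF subB] c by blast
  then show "\<forall>a\<in>G. \<forall>v\<in>V. orth (invol a * c) v" using next_level by blast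
qed

abbreviation K :: "'a set" where "K \<equiv> kernel_L invol L C \<inter> iter_space smul G 1 B"

lemma orth_levels:
  assumes "m \<ge> 1"
  shows "p \<le> m \<Longrightarrow> p + n \<le> 2 * m - 1 \<Longrightarrow> c \<in> iter_space smul G p B \<Longrightarrow>
    y \<in> iter_space smul G n K \<Longrightarrow> orth c y"
proof (induction n arbitrary: p c y)
  case 0
  then show ?case
    using Bm iter_space_le[of p m G B] orth_kernel by auto
next
  case (Suc n)
  have below_m: "orth c' y" if "p' < m" "p' + Suc n \<le> 2 * m - 1" "c' \<in> iter_space smul G p' B"
    for p' c'
    using orth_level_step[of p' "iter_space smul G n K"] Suc.IH[of "Suc p'"] Suc.prems(4) that
    by (simp add: iter_space_Suc)
  show ?case
  proof (cases "p < m")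
    case True
    then show ?thesis using below_m Suc.prems by blast
  next
    case False
    then have "p = m" "Suc n + 1 \<le> m" using Suc.prems(1,2) by auto
    have "y \<in> iter_space smul G (Suc n) (iter_space smul G 1 B)"
      using iter_space_mono[of K "iter_space smul G 1 B" G "Suc n"] Suc.prems(4) by blast
    then have "y \<in> C"
      using iter_space_add iter_space_le[of "Suc n + 1" m G B] Bm \<open>Suc n + 1 \<le> m\<close> by auto
    moreover have "\<forall>b\<in>B. orth b y"
      using below_m[of 0] assms Suc.prems(2) by simp
    moreover have "c \<in> C"
      using Bm \<open>p = m\<close> Suc.prems(3) by blast
    ultimately show ?thesis
      using kernel_criterion orth_kernel by blast
  qed
qed

end

theorem lemma3p3:
  fixes smul :: "complex \<Rightarrow> 'a::ring_1 \<Rightarrow> 'a" and invol :: "'a \<Rightarrow> 'a"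
    and G B C :: "'a set" and L :: "'a \<Rightarrow> complex" and m :: nat
  assumes alg: "star_algebra smul invol"
    and gen: "generators smul invol G"
    and subB: "module.subspace smul B" and subC: "module.subspace smul C"
    and BC: "B \<subseteq> C"
    and invB: "star_invariant invol B" and invC: "star_invariant invol C"
    and oneB: "1 \<in> B"
    and m: "m \<ge> 1"
    and Bm: "iter_space smul G m B \<subseteq> C"
    and lin: "linear_on smul (sq_space smul C) L"
    and herm: "hermitian_on invol (sq_space smul C) L"
    and decomp: "C = set_plus B (kernel_L invol L C)"
  shows "iter_space smul G (2 * m - 1) (kernel_L invol L C \<inter> iter_space smul G 1 B) \<inter> C
           \<subseteq> kernel_L invol L C"
proof
  interpret kernel_setting smul invol G B C L m
    using alg gen subB invC Bm lin herm decomp by unfold_locales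
  fix y assume y: "y \<in> iter_space smul G (2 * m - 1) K \<inter> C"
  have "\<forall>b\<in>B. orth b y"
    using orth_levels[OF m, of 0 "2 * m - 1"] y by simp
  then show "y \<in> kernel_L invol L C"
    using kernel_criterion y by blast
qed

end
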